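(* Let $n\in\mathbb{N}$. For every $i=0,1,\dots,2n-1$, $$\sum_{j=\lfloor i/2\rfloor}^{n-1}\binom{n-1}{j}\left(\binom{n}{j+1}\binom{2j+1}{i}-\binom{n}{j}\binom{2j}{i}\right)\geq 0.$$
   Context: Binomial coefficients $\binom{a}{b}$ with integer $0\le a<b$ are $0$; $\lfloor\cdot\rfloor$ is the integer part. *)

theory Defs
  imports Main
begin

end

theory Submission
  imports Defs "HOL-Computational_Algebra.Polynomial"
begin

text \<open>
  Put n = m + 1 and C(a,b) = a choose b. The sum is the coefficient of x^i in F(1 + x), where
  F(y) = \<Sum>j. C(m,j) (C(m+1,j+1) y^(2j+1) - C(m+1,j) y^(2j)). Pascal's rule gives
  F(y) = (y - 1) G(y) with G(y) = \<Sum>j. C(m,j)^2 y^(2j) - C(m,j) C(m,j+1) y^(2j+1), and G(y) is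
  the coefficient of X^m in (1 + X) ((1 - yX)(X - y))^m. Expanding the binomial power of
  (1 - yX)(X - y) = -y (1 - X)^2 + (y - 1)^2 X gives
  G(y) = \<Sum>r. C(m,r) Cat(r) (y - 1)^(2(m-r)) y^r, where Cat(r) is the Catalan number
  (the coefficient of X^r in (1 + X)(1 - X)^(2r), up to sign). Hence
  F(1 + x) = x \<Sum>r. C(m,r) Cat(r) x^(2(m-r)) (1 + x)^r has nonnegative coefficients.
\<close>

lemma coeff_linear_poly_power':
  fixes a b :: "'a::comm_semiring_1"
  shows "coeff ([:a, b:] ^ n) i = of_nat (n choose i) * b ^ i * a ^ (n - i)"
proof (cases "i \<le> n")
  case True
  then show ?thesis by (rule coeff_linear_poly_power)
next
  case False
  have "degree ([:a, b:] ^ n) \<le> n"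
    by (rule order.trans[OF degree_power_le]) (simp add: degree_pCons_le)
  with False show ?thesis by (simp add: coeff_eq_0 binomial_eq_0)
qed

lemma coeff_linear_poly_mult:
  fixes q :: "'a::comm_semiring_1 poly"
  shows "coeff ([:a, b:] * q) k = a * coeff q k + (if k = 0 then 0 else b * coeff q (k - 1))"
  by (cases k) simp_all

definition catalan :: "nat \<Rightarrow> nat" where
  "catalan r = (2 * r choose r) - (2 * r choose Suc r)"

lemma of_nat_catalan:
  "(of_nat (catalan r) :: 'a::ring_1) = of_nat (2 * r choose r) - of_nat (2 * r choose Suc r)"
  using binomial_maximum'[of r "Suc r"] by (simp add: catalan_def of_nat_diff)

lemma coeff_one_plus_X_mult_one_minus_X_power:
  "coeff ([:1, 1:] * [:1, -1:] ^ (2 * r)) r = ((-1) ^ r :: 'a::comm_ring_1) * of_nat (catalan r)"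
proof (cases r)
  case 0
  then show ?thesis by (simp add: catalan_def)
next
  case (Suc s)
  have "2 * r choose s = 2 * r choose Suc r"
    using binomial_symmetric[of s "2 * r"] Suc by simp
  with Suc show ?thesis
    unfolding coeff_linear_poly_mult coeff_linear_poly_power' of_nat_catalan
    by (simp add: algebra_simps)
qed

lemma binomial_sum_factor:
  fixes y :: "'a::comm_ring_1"
  shows "(\<Sum>j\<le>m. of_nat (m choose j) * (of_nat (Suc m choose Suc j) * y ^ (2 * j + 1)
            - of_nat (Suc m choose j) * y ^ (2 * j)))
       = (y - 1) * (\<Sum>j\<le>m. of_nat (m choose j) ^ 2 * y ^ (2 * j)
            - of_nat (m choose j) * of_nat (m choose Suc j) * y ^ (2 * j + 1))"
proof -
  define c where "c j = (of_nat (m choose j) :: 'a)" for j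
  have pascal: "Suc m choose j = (m choose j) + (if j = 0 then 0 else m choose (j - 1))" for j
    by (cases j) simp_all
  define E where "E = (\<Sum>j\<le>m. c j * (if j = 0 then 0 else c (j - 1)) * y ^ (2 * j))"
  define D where "D = (\<Sum>j\<le>m. c j * c (Suc j) * y ^ (2 * j + 2))"
  have "E = D" \<comment> \<open>the term j + 1 of E is the term j of D\<close>
  proof (cases m)
    case 0
    then show ?thesis by (simp add: E_def D_def c_def)
  next
    case (Suc k)
    have "E = (\<Sum>j\<le>k. c (Suc j) * c j * y ^ (2 * j + 2))"
      unfolding E_def Suc sum.atMost_Suc_shift by (simp add: mult_2)
    also have "\<dots> = D"
      unfolding D_def Suc sum.atMost_Suc by (simp add: c_def mult.commute Suc binomial_eq_0)
    finally show ?thesis .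
  qed
  have "(\<Sum>j\<le>m. c j * (of_nat (Suc m choose Suc j) * y ^ (2 * j + 1)
            - of_nat (Suc m choose j) * y ^ (2 * j)))
      = (\<Sum>j\<le>m. c j ^ 2 * y ^ (2 * j + 1)) + (\<Sum>j\<le>m. c j * c (Suc j) * y ^ (2 * j + 1))
        - (\<Sum>j\<le>m. c j ^ 2 * y ^ (2 * j)) - E"
    unfolding E_def sum.distrib[symmetric] sum_subtractf[symmetric]
    by (rule sum.cong) (auto simp: c_def pascal algebra_simps power2_eq_square)
  also have "\<dots> = (y - 1) * (\<Sum>j\<le>m. c j ^ 2 * y ^ (2 * j) - c j * c (Suc j) * y ^ (2 * j + 1))"
    unfolding \<open>E = D\<close> D_def
    by (simp add: sum_subtractf sum_distrib_left algebra_simps sum.distrib)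
  finally show ?thesis by (simp add: c_def)
qed

lemma coeff_linear_powers_product:
  fixes y :: "'a::comm_ring_1"
  assumes "k \<le> m"
  shows "coeff ([:1, -y:] ^ m * [:-y, 1:] ^ m) k
       = (\<Sum>j\<le>k. of_nat (m choose j) * of_nat (m choose (m - k + j)) * (-y) ^ (m - k + 2 * j))"
  unfolding coeff_mult
proof (rule sum.cong)
  fix j
  assume "j \<in> {..k}"
  then have "j \<le> k" by simp
  then have "m choose (k - j) = m choose (m - k + j)" and "m - (k - j) = m - k + j"
    using binomial_symmetric[of "k - j" m] assms by simp_all
  moreover have "(-y) ^ j * (-y) ^ (m - k + j) = (-y) ^ (m - k + 2 * j)"
    by (simp flip: power_add add: mult_2 add_ac)
  ultimately show "coeff ([:1, -y:] ^ m) j * coeff ([:-y, 1:] ^ m) (k - j)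
      = of_nat (m choose j) * of_nat (m choose (m - k + j)) * (-y) ^ (m - k + 2 * j)"
    unfolding coeff_linear_poly_power' by (simp add: mult_ac)
qed simp

lemma coeff_linear_powers_product_middle:
  fixes y :: "'a::comm_ring_1"
  shows "coeff ([:1, 1:] * ([:1, -y:] ^ m * [:-y, 1:] ^ m)) m
       = (\<Sum>j\<le>m. of_nat (m choose j) ^ 2 * y ^ (2 * j)
            - of_nat (m choose j) * of_nat (m choose Suc j) * y ^ (2 * j + 1))"
proof -
  have even_power: "(-y) ^ (2 * j) = y ^ (2 * j)" for j
    by (simp add: power_mult)
  have upper: "coeff ([:1, -y:] ^ m * [:-y, 1:] ^ m) m
      = (\<Sum>j\<le>m. of_nat (m choose j) ^ 2 * y ^ (2 * j))"
    by (simp add: coeff_linear_powers_product even_power power2_eq_square)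
  show ?thesis
  proof (cases m)
    case 0
    then show ?thesis by simp
  next
    case (Suc k)
    have "coeff ([:1, -y:] ^ m * [:-y, 1:] ^ m) k
        = (\<Sum>j\<le>k. of_nat (m choose j) * of_nat (m choose (m - k + j)) * (-y) ^ (m - k + 2 * j))"
      using Suc by (intro coeff_linear_powers_product) simp
    also have "\<dots> = (\<Sum>j\<le>k. - (of_nat (m choose j) * of_nat (m choose Suc j) * y ^ (2 * j + 1)))"
      using Suc by (simp add: even_power)
    also have "\<dots> = - (\<Sum>j\<le>m. of_nat (m choose j) * of_nat (m choose Suc j) * y ^ (2 * j + 1))"
      unfolding Suc sum.atMost_Suc by (simp add: sum_negf binomial_eq_0)
    finally show ?thesis
      using Suc upper by (simp add: coeff_linear_poly_mult sum_subtractf)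
  qed
qed

lemma linear_polys_product_eq:
  fixes y :: "'a::comm_ring_1"
  shows "[:1, -y:] * [:-y, 1:] = smult (-y) ([:1, -1:] ^ 2) + smult ((y - 1) ^ 2) [:0, 1:]"
  by (simp add: power2_eq_square algebra_simps)

lemma linear_powers_product_expansion:
  fixes y :: "'a::comm_ring_1"
  shows "[:1, -y:] ^ m * [:-y, 1:] ^ m
       = (\<Sum>r\<le>m. smult (of_nat (m choose r) * (-y) ^ r * (y - 1) ^ (2 * (m - r)))
                  (monom 1 (m - r) * [:1, -1:] ^ (2 * r)))"
proof -
  have "[:1, -y:] ^ m * [:-y, 1:] ^ m
      = (\<Sum>r\<le>m. of_nat (m choose r) * (smult (-y) ([:1, -1:] ^ 2)) ^ r
                  * (smult ((y - 1) ^ 2) [:0, 1:]) ^ (m - r))"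
    unfolding power_mult_distrib[symmetric] linear_polys_product_eq by (rule binomial_ring)
  also have "\<dots> = (\<Sum>r\<le>m. smult (of_nat (m choose r) * (-y) ^ r * (y - 1) ^ (2 * (m - r)))
                  (monom 1 (m - r) * [:1, -1:] ^ (2 * r)))"
    by (simp only: smult_power of_nat_poly monom_altdef power_mult smult_1_left) (simp add: mult_ac)
  finally show ?thesis .
qed

lemma coeff_linear_powers_product_catalan:
  fixes y :: "'a::comm_ring_1"
  shows "coeff ([:1, 1:] * ([:1, -y:] ^ m * [:-y, 1:] ^ m)) m
       = (\<Sum>r\<le>m. of_nat ((m choose r) * catalan r) * (y - 1) ^ (2 * (m - r)) * y ^ r)"
proof -
  have sign: "(-y) ^ r * (-1) ^ r = y ^ r" for r
    by (simp flip: power_mult_distrib)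
  have "coeff ([:1, 1:] * smult (of_nat (m choose r) * (-y) ^ r * (y - 1) ^ (2 * (m - r)))
                (monom 1 (m - r) * [:1, -1:] ^ (2 * r))) m
      = of_nat ((m choose r) * catalan r) * (y - 1) ^ (2 * (m - r)) * y ^ r" if "r \<le> m" for r
  proof -
    have "coeff (monom 1 (m - r) * ([:1, 1:] * [:1, -1:] ^ (2 * r))) m
        = (-1) ^ r * (of_nat (catalan r) :: 'a)"
      using that
      by (simp add: coeff_monom_mult coeff_one_plus_X_mult_one_minus_X_power del: mult_pCons_left)
    then show ?thesis
      unfolding mult_smult_right mult.left_commute[of "[:1, 1:]"] coeff_smult of_nat_mult
        sign[symmetric]
      by (simp only: mult_ac)
  qed
  then show ?thesis
    unfolding linear_powers_product_expansion sum_distrib_left coeff_sum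
    by (intro sum.cong) simp_all
qed

lemma binomial_square_sum_catalan_expansion:
  fixes y :: "'a::comm_ring_1"
  shows "(\<Sum>j\<le>m. of_nat (m choose j) ^ 2 * y ^ (2 * j)
            - of_nat (m choose j) * of_nat (m choose Suc j) * y ^ (2 * j + 1))
       = (\<Sum>r\<le>m. of_nat ((m choose r) * catalan r) * (y - 1) ^ (2 * (m - r)) * y ^ r)"
  using coeff_linear_powers_product_middle[of y m] coeff_linear_powers_product_catalan[of y m]
  by simp

definition nonneg_coeffs :: "'a::linordered_semidom poly \<Rightarrow> bool" where
  "nonneg_coeffs p \<longleftrightarrow> (\<forall>k. 0 \<le> coeff p k)"

lemma nonneg_coeffs_0: "nonneg_coeffs 0"
  by (simp add: nonneg_coeffs_def)

lemma nonneg_coeffs_pCons: "0 \<le> a \<Longrightarrow> nonneg_coeffs p \<Longrightarrow> nonneg_coeffs (pCons a p)"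
  by (simp add: nonneg_coeffs_def coeff_pCons split: nat.split)

lemma nonneg_coeffs_of_nat: "nonneg_coeffs (of_nat k)"
  by (simp add: of_nat_poly nonneg_coeffs_pCons nonneg_coeffs_0)

lemma nonneg_coeffs_1: "nonneg_coeffs 1"
  by (simp add: one_pCons nonneg_coeffs_pCons nonneg_coeffs_0)

lemma nonneg_coeffs_mult: "nonneg_coeffs p \<Longrightarrow> nonneg_coeffs q \<Longrightarrow> nonneg_coeffs (p * q)"
  unfolding nonneg_coeffs_def coeff_mult by (auto intro!: sum_nonneg)

lemma nonneg_coeffs_power: "nonneg_coeffs p \<Longrightarrow> nonneg_coeffs (p ^ k)"
  by (induction k) (simp_all add: nonneg_coeffs_mult nonneg_coeffs_1)

lemma nonneg_coeffs_sum: "(\<And>x. x \<in> A \<Longrightarrow> nonneg_coeffs (f x)) \<Longrightarrow> nonneg_coeffs (sum f A)"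
  unfolding nonneg_coeffs_def coeff_sum by (auto intro!: sum_nonneg)

lemma coeff_binomial_sum_at_one_plus_X:
  "coeff (\<Sum>j\<le>m. of_nat (m choose j) * (of_nat (Suc m choose Suc j) * [:1, 1:] ^ (2 * j + 1)
            - of_nat (Suc m choose j) * [:1, 1:] ^ (2 * j))) i
   = (\<Sum>j\<le>m. of_nat (m choose j) * (of_nat (Suc m choose Suc j) * of_nat ((2 * j + 1) choose i)
            - of_nat (Suc m choose j) * (of_nat ((2 * j) choose i) :: 'a::comm_ring_1)))"
proof -
  have coeff_of_nat_mult: "coeff (of_nat k * p) i = of_nat k * coeff p i" for k and p :: "'a poly"
    by (simp add: of_nat_poly)
  show ?thesis
    unfolding coeff_sum
    by (simp only: coeff_of_nat_mult coeff_diff coeff_linear_poly_power' power_one mult_1_right)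
qed

theorem mainTheorem7:
  fixes n i :: nat
  assumes "i < 2 * n"
  shows "(\<Sum>j = i div 2..n - 1.
            int ((n - 1) choose j) *
            (int (n choose (j + 1)) * int ((2 * j + 1) choose i)
             - int (n choose j) * int ((2 * j) choose i))) \<ge> 0"
proof -
  obtain m where n: "n = Suc m"
    using assms by (cases n) auto
  define t where "t j = int (m choose j) * (int (Suc m choose Suc j) * int ((2 * j + 1) choose i)
                          - int (Suc m choose j) * int ((2 * j) choose i))" for j
  define F :: "int poly" where
    "F = (\<Sum>j\<le>m. of_nat (m choose j) * (of_nat (Suc m choose Suc j) * [:1, 1:] ^ (2 * j + 1)
                    - of_nat (Suc m choose j) * [:1, 1:] ^ (2 * j)))"
  have "[:1, 1:] - 1 = [:0, 1 :: int:]"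
    by (simp add: one_pCons)
  then have "F = [:0, 1:] * (\<Sum>r\<le>m. of_nat ((m choose r) * catalan r) * [:0, 1:] ^ (2 * (m - r))
                                * [:1, 1:] ^ r)"
    unfolding F_def binomial_sum_factor binomial_square_sum_catalan_expansion by simp
  then have "nonneg_coeffs F"
    by (simp add: nonneg_coeffs_mult nonneg_coeffs_sum nonneg_coeffs_power nonneg_coeffs_of_nat
        nonneg_coeffs_pCons nonneg_coeffs_0)
  have "(\<Sum>j = i div 2..n - 1. int ((n - 1) choose j) *
            (int (n choose (j + 1)) * int ((2 * j + 1) choose i)
             - int (n choose j) * int ((2 * j) choose i))) = (\<Sum>j = i div 2..m. t j)"
    by (simp add: n t_def)
  also have "\<dots> = (\<Sum>j\<le>m. t j)"
    by (rule sum.mono_neutral_left) (auto simp: t_def binomial_eq_0)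
  also have "\<dots> = coeff F i"
    unfolding F_def coeff_binomial_sum_at_one_plus_X t_def by simp
  finally show ?thesis
    using \<open>nonneg_coeffs F\<close> by (simp add: nonneg_coeffs_def)
qed

end
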